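(* Assume the setting and conditions below. Then for almost every $\omega\in\Omega$ the function $\theta\mapsto\max_{W\in\mathcal W}F(W,H(\theta,\omega))$ is Fréchet differentiable on $\Theta$, and at each $\theta\in\Theta$ its gradient equals $\nabla_\theta F(W,H(\theta,\omega))|_{W=W^*(\theta,\omega)}$ for every $W^*(\theta,\omega)\in\arg\max_{W\in\mathcal W}F(W,H(\theta,\omega))$, irrespective of the choice of this maximizer.
   Context: Let $\omega$ be a random element with values in $\Omega$; let $K,M$ be positive integers, $M_U=MK$, $S$ a positive integer, $\Theta\subset\mathbb R^S$ compact convex, $\mathcal U\supset\Theta$ open, $H:\mathcal U\times\Omega\to\mathbb C^{M_U}$, $H=\mathrm{vec}(h_1,\dots,h_K)$ with $h_k\in\mathbb C^M$. Let $P>0$ and $\mathcal W=\{W\in\mathbb C^{M_U}:\|W\|^2\le P\}$, $W=\mathrm{vec}(w_1,\dots,w_K)$. $F$ is the weighted sumrate $F(W,H)=\sum_{k=1}^K\alpha_k\log_2\big(1+\frac{|h_k^{\mathsf H}w_k|^2}{\sum_{j\ne k}|h_k^{\mathsf H}w_j|^2+\sigma_k^2}\big)$ with $\alpha_k\ge0$, $\sigma_k^2>0$. Conditions: (A3) there are constants $B_H,L_{H,0},L_{H,1}$ such that for a.e. $\omega$, $H(\cdot,\omega)$ is bounded by $B_H$ on $\Theta$, twice continuously differentiable on $\mathcal U$, $L_{H,0}$-Lipschitz with $L_{H,1}$-Lipschitz gradient on $\Theta$; $H(\cdot,\omega)$ is real-analytic on $\mathcal U$ for a.e. $\omega$; strong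 second-order sufficient optimality: for every $\theta\in\Theta$, a.e. $\omega$ and every maximizer $W^*$ of $F(\cdot,H(\theta,\omega))$ over $\mathcal W$, with Lagrangian $L(W,\lambda;\theta,\omega)=F(W,H(\theta,\omega))+\lambda(\|W\|^2-P)$, there is $\lambda^*\ge0$ with strict complementarity ($\lambda^*>0$ if $\|W^*\|^2=P$, $\lambda^*=0$ otherwise) and $\nabla^2_WL(W^*,\lambda^*;\theta,\omega)$ nonsingular. Further, $\Theta''$ compact and $\Theta'$ open with $\mathcal U\supset\Theta''\supset\Theta'\supset\Theta$, and there are $\eta>0$ and a positive function $C(\theta)$ uniformly bounded on $\Theta''$ such that for a.e. $\omega$ and all $(\theta,W)\in\mathcal U\times\mathcal W$: $\mathrm{dist}(W,\arg\max_{V\in\mathcal W}F(V,H(\theta,\omega)))\le C(\theta)\big(\max_{V\in\mathcal W}F(V,H(\theta,\omega))-F(W,H(\theta,\omega))\big)^\eta$. *)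

theory Defs
  imports "HOL-Probability.Probability"
begin

text \<open>Channel H = vec(h_1,...,h_K), each h_k in C^M, is modelled as an element of
  complex^'m^'k (CARD('k) = K, CARD('m) = M); likewise the beamformer
  W = vec(w_1,...,w_K).  The Euclidean norm of complex^'m^'k is the norm of
  vec(W) in C^(MK).  Complex spaces are regarded as real Euclidean spaces.\<close>

definition herm_ip :: "complex^'m \<Rightarrow> complex^'m \<Rightarrow> complex" where
  "herm_ip h w = (\<Sum>i\<in>UNIV. cnj (h $ i) * w $ i)"

definition sumrate :: "('k::finite \<Rightarrow> real) \<Rightarrow> ('k \<Rightarrow> real) \<Rightarrow>
    complex^'m^'k \<Rightarrow> complex^'m^'k \<Rightarrow> real" where
  "sumrate \<alpha> \<sigma>2 W H = (\<Sum>k\<in>UNIV. \<alpha> k * log 2 (1 +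
      (cmod (herm_ip (H $ k) (W $ k)))\<^sup>2 /
      ((\<Sum>j\<in>UNIV - {k}. (cmod (herm_ip (H $ k) (W $ j)))\<^sup>2) + \<sigma>2 k)))"

definition feasible :: "real \<Rightarrow> ('a::real_normed_vector) set" where
  "feasible P = {W. (norm W)\<^sup>2 \<le> P}"

definition maxval :: "('a \<Rightarrow> real) \<Rightarrow> 'a set \<Rightarrow> real" where
  "maxval f A = (SUP V\<in>A. f V)"

definition argmaxset :: "('a \<Rightarrow> real) \<Rightarrow> 'a set \<Rightarrow> 'a set" where
  "argmaxset f A = {W\<in>A. \<forall>V\<in>A. f V \<le> f W}"

definition C2_on :: "'a::real_normed_vector set \<Rightarrow> ('a \<Rightarrow> 'b::real_normed_vector) \<Rightarrow> bool" where
  "C2_on U f \<longleftrightarrow> (\<exists>f' f''. (\<forall>x\<in>U. (f has_derivative blinfun_apply (f' x)) (at x)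
      \<and> (f' has_derivative blinfun_apply (f'' x)) (at x)) \<and> continuous_on U f'')"

text \<open>Real analyticity of a map on R^S: locally the sum of an (unconditionally,
  equivalently absolutely) convergent multivariate power series.\<close>
definition real_analytic_on :: "(real^'s \<Rightarrow> 'b::real_normed_vector) \<Rightarrow> (real^'s) set \<Rightarrow> bool" where
  "real_analytic_on f U \<longleftrightarrow> (\<forall>x\<in>U. \<exists>r>0. \<exists>c :: ('s \<Rightarrow> nat) \<Rightarrow> 'b.
      \<forall>y\<in>ball x r. ((\<lambda>\<beta>. (\<Prod>i\<in>UNIV. (y $ i - x $ i) ^ \<beta> i) *\<^sub>R c \<beta>) has_sum f y) UNIV)"

definition nonsingular_hessian :: "('a::euclidean_space \<Rightarrow> real) \<Rightarrow> 'a \<Rightarrow> bool" where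
  "nonsingular_hessian f x \<longleftrightarrow> (\<exists>g hs. (\<exists>e>0. \<forall>y\<in>ball x e.
      (f has_derivative (\<lambda>v. g y \<bullet> v)) (at y)) \<and> (g has_derivative hs) (at x) \<and> inj hs)"

end

theory Submission
  imports Defs
begin

(* Danskin's argument with an error bound. Write g W theta = F(W, H(theta, omega)) on the compact
   feasible ball X. The sum rate is continuously differentiable jointly in (W, H), so for an H that
   is differentiable at theta0 the increments of g W are approximated by a derivative D W uniformly
   in W in X, and D W depends continuously on W. The Hoelder error bound turns a small optimality gap
   into a small distance to the maximizer set, so the maximizer set moves continuously with theta.
   Hence all maximizers at theta0 have the same derivative: if D V1 d > D V2 d, moving theta along d
   would make V1 strictly better than every point near V2, pushing the maximizers away from V2 although
   its gap stays small. Finally the value function is squeezed between g at a maximizer for theta0 and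
   g at a maximizer for theta, whose derivatives agree up to epsilon, so it has that common derivative.
   Only the differentiability of H(., omega) and the error bound are needed. *)

definition has_continuous_derivative ::
    "('a::real_normed_vector \<Rightarrow> real) \<Rightarrow> ('a \<Rightarrow> 'a \<Rightarrow>\<^sub>L real) \<Rightarrow> bool" where
  "has_continuous_derivative f f' \<longleftrightarrow>
    (\<forall>x. (f has_derivative blinfun_apply (f' x)) (at x)) \<and> continuous_on UNIV f'"

definition continuously_differentiable :: "('a::real_normed_vector \<Rightarrow> real) \<Rightarrow> bool" where
  "continuously_differentiable f \<longleftrightarrow> (\<exists>f'. has_continuous_derivative f f')"

lemma has_continuous_derivative_imp_continuous:
  "has_continuous_derivative f f' \<Longrightarrow> continuous_on UNIV f"
  unfolding has_continuous_derivative_def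
  by (meson continuous_at_imp_continuous_on has_derivative_continuous)

lemma continuously_differentiable_const: "continuously_differentiable (\<lambda>x. c)"
  unfolding continuously_differentiable_def has_continuous_derivative_def
  by (rule exI[of _ "\<lambda>_. 0"]) (auto simp: zero_blinfun.rep_eq)

lemma continuously_differentiable_bounded_linear:
  "bounded_linear f \<Longrightarrow> continuously_differentiable f"
  unfolding continuously_differentiable_def has_continuous_derivative_def
  by (rule exI[of _ "\<lambda>_. Blinfun f"])
    (auto simp: bounded_linear_Blinfun_apply bounded_linear_imp_has_derivative)

lemma continuously_differentiable_add:
  assumes "continuously_differentiable f" "continuously_differentiable g"
  shows "continuously_differentiable (\<lambda>x. f x + g x)"
proof -
  obtain f' g' where "has_continuous_derivative f f'" "has_continuous_derivative g g'"
    using assms unfolding continuously_differentiable_def by blast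
  then have "has_continuous_derivative (\<lambda>x. f x + g x) (\<lambda>x. f' x + g' x)"
    unfolding has_continuous_derivative_def
    by (auto intro!: derivative_eq_intros continuous_intros simp: blinfun.add_left)
  then show ?thesis unfolding continuously_differentiable_def by blast
qed

lemma continuously_differentiable_diff:
  assumes "continuously_differentiable f" "continuously_differentiable g"
  shows "continuously_differentiable (\<lambda>x. f x - g x)"
proof -
  obtain f' g' where "has_continuous_derivative f f'" "has_continuous_derivative g g'"
    using assms unfolding continuously_differentiable_def by blast
  then have "has_continuous_derivative (\<lambda>x. f x - g x) (\<lambda>x. f' x - g' x)"
    unfolding has_continuous_derivative_def
    by (auto intro!: derivative_eq_intros continuous_intros simp: blinfun.diff_left)
  then show ?thesis unfolding continuously_differentiable_def by blast
qed

lemma continuously_differentiable_mult: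
  assumes "continuously_differentiable f" "continuously_differentiable g"
  shows "continuously_differentiable (\<lambda>x. f x * g x)"
proof -
  obtain f' g' where "has_continuous_derivative f f'" "has_continuous_derivative g g'"
    using assms unfolding continuously_differentiable_def by blast
  moreover have "continuous_on UNIV f" "continuous_on UNIV g"
    using calculation by (auto intro: has_continuous_derivative_imp_continuous)
  ultimately have "has_continuous_derivative (\<lambda>x. f x * g x) (\<lambda>x. f x *\<^sub>R g' x + g x *\<^sub>R f' x)"
    unfolding has_continuous_derivative_def
    by (auto intro!: derivative_eq_intros continuous_intros
        simp: blinfun.add_left blinfun.scaleR_left)
  then show ?thesis unfolding continuously_differentiable_def by blast
qed

lemma continuously_differentiable_sum:
  "finite A \<Longrightarrow> (\<And>i. i \<in> A \<Longrightarrow> continuously_differentiable (f i))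
    \<Longrightarrow> continuously_differentiable (\<lambda>x. \<Sum>i\<in>A. f i x)"
  by (induction A rule: finite_induct)
    (auto intro: continuously_differentiable_const continuously_differentiable_add)

lemma continuously_differentiable_ln:
  assumes "continuously_differentiable f" "\<And>x. 0 < f x"
  shows "continuously_differentiable (\<lambda>x. ln (f x))"
proof -
  obtain f' where "has_continuous_derivative f f'"
    using assms unfolding continuously_differentiable_def by blast
  moreover have "continuous_on UNIV f"
    using calculation by (rule has_continuous_derivative_imp_continuous)
  ultimately have "has_continuous_derivative (\<lambda>x. ln (f x)) (\<lambda>x. inverse (f x) *\<^sub>R f' x)"
    using assms(2) unfolding has_continuous_derivative_def
    by (auto intro!: derivative_eq_intros continuous_intros simp: blinfun.scaleR_left
        dest: less_imp_neq[symmetric])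
  then show ?thesis unfolding continuously_differentiable_def by blast
qed

lemma continuously_differentiable_inverse:
  assumes "continuously_differentiable f" "\<And>x. 0 < f x"
  shows "continuously_differentiable (\<lambda>x. inverse (f x))"
proof -
  obtain f' where "has_continuous_derivative f f'"
    using assms unfolding continuously_differentiable_def by blast
  moreover have "continuous_on UNIV f"
    using calculation by (rule has_continuous_derivative_imp_continuous)
  ultimately have "has_continuous_derivative (\<lambda>x. inverse (f x))
      (\<lambda>x. (- (inverse (f x) * inverse (f x))) *\<^sub>R f' x)"
    using assms(2) unfolding has_continuous_derivative_def
    by (auto intro!: derivative_eq_intros continuous_intros
        simp: blinfun.scaleR_left blinfun.minus_left fun_eq_iff dest: less_imp_neq[symmetric])
  then show ?thesis unfolding continuously_differentiable_def by blast
qed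

lemma cmod_herm_ip_squared:
  "(cmod (herm_ip h w))\<^sup>2 =
     (\<Sum>i\<in>UNIV. Re (h $ i) * Re (w $ i) + Im (h $ i) * Im (w $ i)) *
     (\<Sum>i\<in>UNIV. Re (h $ i) * Re (w $ i) + Im (h $ i) * Im (w $ i)) +
     (\<Sum>i\<in>UNIV. Re (h $ i) * Im (w $ i) - Im (h $ i) * Re (w $ i)) *
     (\<Sum>i\<in>UNIV. Re (h $ i) * Im (w $ i) - Im (h $ i) * Re (w $ i))"
  unfolding cmod_power2 by (simp add: herm_ip_def Re_sum Im_sum power2_eq_square)

lemma continuously_differentiable_sumrate:
  fixes \<alpha> \<sigma>2 :: "'k::finite \<Rightarrow> real"
  assumes "\<And>k. \<sigma>2 k > 0"
  shows "continuously_differentiable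
    (\<lambda>p::(complex^'m^'k) \<times> (complex^'m^'k). sumrate \<alpha> \<sigma>2 (fst p) (snd p))"
proof -
  let ?gain = "\<lambda>(p::(complex^'m^'k) \<times> (complex^'m^'k)) k j.
    (cmod (herm_ip (snd p $ k) (fst p $ j)))\<^sup>2"
  have gain: "continuously_differentiable (\<lambda>p. ?gain p k j)" for k j
    unfolding cmod_herm_ip_squared
    by (intro continuously_differentiable_add continuously_differentiable_mult
        continuously_differentiable_sum continuously_differentiable_diff finite
        continuously_differentiable_bounded_linear
        bounded_linear_compose[OF bounded_linear_Re] bounded_linear_compose[OF bounded_linear_Im]
        bounded_linear_compose[OF bounded_linear_vec_nth] bounded_linear_fst bounded_linear_snd)
  have denom_pos: "0 < (\<Sum>j\<in>UNIV - {k}. ?gain p k j) + \<sigma>2 k" for p k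
    using assms[of k] by (smt (verit) sum_nonneg zero_le_power2)
  then have ln_arg_pos:
    "0 < 1 + ?gain p k k * inverse ((\<Sum>j\<in>UNIV - {k}. ?gain p k j) + \<sigma>2 k)" for p k
    by (metis add_pos_nonneg inverse_nonnegative_iff_nonnegative less_imp_le
        mult_nonneg_nonneg zero_le_power2 zero_less_one)
  have "continuously_differentiable (\<lambda>p. \<Sum>k\<in>UNIV. \<alpha> k *
      (ln (1 + ?gain p k k * inverse ((\<Sum>j\<in>UNIV - {k}. ?gain p k j) + \<sigma>2 k)) * inverse (ln 2)))"
    using denom_pos ln_arg_pos
    by (intro continuously_differentiable_sum continuously_differentiable_mult
        continuously_differentiable_const continuously_differentiable_ln
        continuously_differentiable_add continuously_differentiable_inverse gain finite)
  then show ?thesis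
    by (simp add: sumrate_def log_def divide_inverse)
qed

lemma has_continuous_derivative_uniform_expansion:
  fixes F :: "'a::euclidean_space \<Rightarrow> real"
  assumes F: "has_continuous_derivative F F'" and "\<epsilon> > 0"
  shows "\<exists>\<delta>>0. \<forall>p\<in>cball 0 R. \<forall>q\<in>cball 0 R. dist p q < \<delta> \<longrightarrow>
    \<bar>F q - F p - F' p (q - p)\<bar> \<le> \<epsilon> * norm (q - p)"
proof -
  have "uniformly_continuous_on (cball 0 R) F'"
    using F unfolding has_continuous_derivative_def
    by (intro compact_uniformly_continuous) (auto intro: continuous_on_subset)
  then obtain \<delta> where "\<delta> > 0"
    and \<delta>: "\<forall>p\<in>cball 0 R. \<forall>q\<in>cball 0 R. dist q p < \<delta> \<longrightarrow> dist (F' q) (F' p) < \<epsilon>"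
    using \<open>\<epsilon> > 0\<close> unfolding uniformly_continuous_on_def by blast
  have "\<bar>F q - F p - F' p (q - p)\<bar> \<le> \<epsilon> * norm (q - p)"
    if pq: "p \<in> cball 0 R" "q \<in> cball 0 R" "dist p q < \<delta>" for p q
  proof -
    define S where "S = cball 0 R \<inter> ball p \<delta>"
    have "p \<in> S" "q \<in> S" using pq \<open>\<delta> > 0\<close> by (auto simp: S_def)
    have deriv: "((\<lambda>x. F x - F' p x) has_derivative (\<lambda>v. F' x v - F' p v)) (at x within S)" for x
    proof -
      have "(F has_derivative F' x) (at x within S)"
        using F unfolding has_continuous_derivative_def by (blast intro: has_derivative_at_withinI)
      from has_derivative_diff[OF this bounded_linear_imp_has_derivative[OF blinfun.bounded_linear_right]]
      show ?thesis .
    qed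
    have bound: "onorm (\<lambda>v. F' x v - F' p v) \<le> \<epsilon>" if "x \<in> S" for x
    proof -
      have "onorm (\<lambda>v. F' x v - F' p v) = norm (F' x - F' p)"
        by (simp add: norm_blinfun.rep_eq blinfun.diff_left[symmetric])
      also have "\<dots> < \<epsilon>" using \<delta> that pq(1) by (auto simp: S_def dist_norm norm_minus_commute)
      finally show ?thesis by simp
    qed
    have "convex S" unfolding S_def by (intro convex_Int convex_cball convex_ball)
    from differentiable_bound[OF this deriv bound \<open>q \<in> S\<close> \<open>p \<in> S\<close>]
    have "norm ((F q - F' p q) - (F p - F' p p)) \<le> \<epsilon> * norm (q - p)" .
    then show ?thesis by (simp add: blinfun.diff_right algebra_simps)
  qed
  with \<open>\<delta> > 0\<close> show ?thesis by blast
qed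

lemma has_derivative_imp_local_lipschitz:
  assumes "(h has_derivative L) (at x0)"
  obtains K \<delta> where "K \<ge> 0" "\<delta> > 0" "\<And>x. norm (x - x0) < \<delta> \<Longrightarrow> norm (h x - h x0) \<le> K * norm (x - x0)"
proof -
  obtain B where "B > 0" and B: "\<And>v. norm (L v) \<le> norm v * B"
    using bounded_linear.pos_bounded[OF has_derivative_bounded_linear[OF assms]] by blast
  obtain \<delta> where "\<delta> > 0"
    and \<delta>: "\<forall>x. norm (x - x0) < \<delta> \<longrightarrow> norm (h x - h x0 - L (x - x0)) \<le> 1 * norm (x - x0)"
    using assms unfolding has_derivative_at_alt by (meson zero_less_one)
  have "norm (h x - h x0) \<le> (B + 1) * norm (x - x0)" if "norm (x - x0) < \<delta>" for x
  proof -
    have "norm (h x - h x0) \<le> norm (h x - h x0 - L (x - x0)) + norm (L (x - x0))"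
      using norm_triangle_ineq[of "h x - h x0 - L (x - x0)" "L (x - x0)"] by simp
    also have "\<dots> \<le> norm (x - x0) + norm (x - x0) * B"
      using \<delta> that B[of "x - x0"] by (intro add_mono) auto
    finally show ?thesis by (simp add: algebra_simps)
  qed
  with \<open>B > 0\<close> \<open>\<delta> > 0\<close> show thesis by (intro that[of "B + 1" \<delta>]) auto
qed

lemma has_continuous_derivative_bounded:
  fixes F :: "'a::euclidean_space \<Rightarrow> real"
  assumes "has_continuous_derivative F F'"
  obtains B where "B > 0" "\<And>p. p \<in> cball 0 R \<Longrightarrow> norm (F' p) \<le> B"
proof -
  have "compact (F' ` cball 0 R)"
    using assms unfolding has_continuous_derivative_def
    by (intro compact_continuous_image compact_cball) (auto intro: continuous_on_subset)
  then show thesis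
    using compact_imp_bounded bounded_pos that by (metis imageI)
qed

lemma uniform_partial_expansion:
  fixes F :: "'w::euclidean_space \<times> 'h::euclidean_space \<Rightarrow> real"
  assumes F: "has_continuous_derivative F F'" and "bounded X" and "\<epsilon> > 0"
  shows "\<exists>\<delta>>0. \<forall>W\<in>X. \<forall>y. norm (y - y0) < \<delta> \<longrightarrow>
    \<bar>F (W, y) - F (W, y0) - F' (W, y0) (0, y - y0)\<bar> \<le> \<epsilon> * norm (y - y0)"
proof -
  obtain \<rho> where \<rho>: "\<forall>W\<in>X. norm W \<le> \<rho>" using \<open>bounded X\<close> bounded_iff by blast
  define R where "R = \<rho> + norm y0 + 1"
  obtain \<delta> where "\<delta> > 0" and expand: "\<forall>p\<in>cball 0 R. \<forall>q\<in>cball 0 R. dist p q < \<delta> \<longrightarrow>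
      \<bar>F q - F p - F' p (q - p)\<bar> \<le> \<epsilon> * norm (q - p)"
    using has_continuous_derivative_uniform_expansion[OF F \<open>\<epsilon> > 0\<close>] by blast
  have "\<bar>F (W, y) - F (W, y0) - F' (W, y0) (0, y - y0)\<bar> \<le> \<epsilon> * norm (y - y0)"
    if "W \<in> X" "norm (y - y0) < min \<delta> 1" for W y
  proof -
    have "norm W \<le> \<rho>" using \<rho> \<open>W \<in> X\<close> by blast
    have "norm (W, y0) \<le> norm W + norm y0" by (rule norm_Pair_le)
    then have "(W, y0) \<in> cball 0 R" using \<open>norm W \<le> \<rho>\<close> by (simp add: R_def)
    have "norm (W, y) \<le> norm W + norm y" by (rule norm_Pair_le)
    moreover have "norm y \<le> norm y0 + norm (y - y0)" using norm_triangle_sub[of y y0] by simp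
    ultimately have "(W, y) \<in> cball 0 R" using \<open>norm W \<le> \<rho>\<close> that(2) by (simp add: R_def)
    moreover have "dist (W, y0) (W, y) < \<delta>"
      using that(2) by (simp add: dist_Pair_Pair dist_norm norm_minus_commute)
    ultimately show ?thesis
      using expand \<open>(W, y0) \<in> cball 0 R\<close> by (fastforce simp: norm_Pair)
  qed
  then show ?thesis using \<open>\<delta> > 0\<close> by (intro exI[of _ "min \<delta> 1"]) auto
qed

lemma uniform_partial_expansion_along:
  fixes F :: "'w::euclidean_space \<times> 'h::euclidean_space \<Rightarrow> real"
    and h :: "'a::real_normed_vector \<Rightarrow> 'h"
  assumes F: "has_continuous_derivative F F'" and h: "(h has_derivative L) (at \<theta>0)"
    and "bounded X" and "\<epsilon> > 0"
  shows "\<exists>\<delta>>0. \<forall>W\<in>X. \<forall>\<theta>. norm (\<theta> - \<theta>0) < \<delta> \<longrightarrow>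
    \<bar>F (W, h \<theta>) - F (W, h \<theta>0) - F' (W, h \<theta>0) (0, h \<theta> - h \<theta>0)\<bar> \<le> \<epsilon> * norm (\<theta> - \<theta>0)"
proof -
  obtain K \<delta>1 where "K \<ge> 0" "\<delta>1 > 0"
    and lip: "\<And>\<theta>. norm (\<theta> - \<theta>0) < \<delta>1 \<Longrightarrow> norm (h \<theta> - h \<theta>0) \<le> K * norm (\<theta> - \<theta>0)"
    using has_derivative_imp_local_lipschitz[OF h] by blast
  have "\<epsilon> / (K + 1) > 0" using \<open>\<epsilon> > 0\<close> \<open>K \<ge> 0\<close> by simp
  then obtain \<delta>2 where "\<delta>2 > 0"
    and expand: "\<forall>W\<in>X. \<forall>y. norm (y - h \<theta>0) < \<delta>2 \<longrightarrow> \<bar>F (W, y) - F (W, h \<theta>0)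
      - F' (W, h \<theta>0) (0, y - h \<theta>0)\<bar> \<le> \<epsilon> / (K + 1) * norm (y - h \<theta>0)"
    using uniform_partial_expansion[OF F \<open>bounded X\<close>] by blast
  have "\<bar>F (W, h \<theta>) - F (W, h \<theta>0) - F' (W, h \<theta>0) (0, h \<theta> - h \<theta>0)\<bar> \<le> \<epsilon> * norm (\<theta> - \<theta>0)"
    if "W \<in> X" "norm (\<theta> - \<theta>0) < min \<delta>1 (\<delta>2 / (K + 1))" for W \<theta>
  proof -
    have "norm (h \<theta> - h \<theta>0) \<le> K * norm (\<theta> - \<theta>0)" using lip that(2) by simp
    also have "\<dots> \<le> (K + 1) * norm (\<theta> - \<theta>0)" by (simp add: algebra_simps)
    finally have "norm (h \<theta> - h \<theta>0) \<le> (K + 1) * norm (\<theta> - \<theta>0)" .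
    moreover have "(K + 1) * norm (\<theta> - \<theta>0) < \<delta>2" using that(2) \<open>K \<ge> 0\<close> by (simp add: field_simps)
    ultimately have "\<bar>F (W, h \<theta>) - F (W, h \<theta>0) - F' (W, h \<theta>0) (0, h \<theta> - h \<theta>0)\<bar>
        \<le> \<epsilon> / (K + 1) * ((K + 1) * norm (\<theta> - \<theta>0))"
      using expand \<open>W \<in> X\<close> \<open>\<epsilon> > 0\<close> \<open>K \<ge> 0\<close>
      by (smt (verit) divide_nonneg_nonneg mult_left_mono)
    also have "\<dots> = \<epsilon> * norm (\<theta> - \<theta>0)" using \<open>K \<ge> 0\<close> by simp
    finally show ?thesis .
  qed
  moreover have "min \<delta>1 (\<delta>2 / (K + 1)) > 0" using \<open>\<delta>1 > 0\<close> \<open>\<delta>2 > 0\<close> \<open>K \<ge> 0\<close> by simp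
  ultimately show ?thesis by blast
qed

lemma uniform_chain_rule:
  fixes F :: "'w::euclidean_space \<times> 'h::euclidean_space \<Rightarrow> real"
    and h :: "'a::real_normed_vector \<Rightarrow> 'h"
  assumes F: "has_continuous_derivative F F'" and h: "(h has_derivative L) (at \<theta>0)"
    and "bounded X" and "\<epsilon> > 0"
  shows "\<exists>\<delta>>0. \<forall>W\<in>X. \<forall>\<theta>. norm (\<theta> - \<theta>0) < \<delta> \<longrightarrow>
    \<bar>F (W, h \<theta>) - F (W, h \<theta>0) - F' (W, h \<theta>0) (0, L (\<theta> - \<theta>0))\<bar> \<le> \<epsilon> * norm (\<theta> - \<theta>0)"
proof -
  obtain \<rho> where \<rho>: "\<forall>W\<in>X. norm W \<le> \<rho>" using \<open>bounded X\<close> bounded_iff by blast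
  obtain B where "B > 0" and B_ball: "\<And>p. p \<in> cball 0 (\<rho> + norm (h \<theta>0)) \<Longrightarrow> norm (F' p) \<le> B"
    using has_continuous_derivative_bounded[OF F] by blast
  have B: "norm (F' (W, h \<theta>0)) \<le> B" if "W \<in> X" for W
    using norm_Pair_le[of W "h \<theta>0"] \<rho> that by (intro B_ball) fastforce
  obtain \<delta>1 where "\<delta>1 > 0" and expand: "\<forall>W\<in>X. \<forall>\<theta>. norm (\<theta> - \<theta>0) < \<delta>1 \<longrightarrow>
      \<bar>F (W, h \<theta>) - F (W, h \<theta>0) - F' (W, h \<theta>0) (0, h \<theta> - h \<theta>0)\<bar> \<le> \<epsilon> / 2 * norm (\<theta> - \<theta>0)"
    using uniform_partial_expansion_along[OF F h \<open>bounded X\<close>, of "\<epsilon> / 2"] \<open>\<epsilon> > 0\<close> by auto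
  have "\<epsilon> / (2 * B) > 0" using \<open>\<epsilon> > 0\<close> \<open>B > 0\<close> by simp
  then obtain \<delta>2 where "\<delta>2 > 0" and h_expand: "\<forall>\<theta>. norm (\<theta> - \<theta>0) < \<delta>2 \<longrightarrow>
      norm (h \<theta> - h \<theta>0 - L (\<theta> - \<theta>0)) \<le> \<epsilon> / (2 * B) * norm (\<theta> - \<theta>0)"
    using h unfolding has_derivative_at_alt by blast
  have "\<bar>F (W, h \<theta>) - F (W, h \<theta>0) - F' (W, h \<theta>0) (0, L (\<theta> - \<theta>0))\<bar> \<le> \<epsilon> * norm (\<theta> - \<theta>0)"
    if "W \<in> X" "norm (\<theta> - \<theta>0) < min \<delta>1 \<delta>2" for W \<theta>
  proof -
    have "\<bar>F' (W, h \<theta>0) (0, h \<theta> - h \<theta>0) - F' (W, h \<theta>0) (0, L (\<theta> - \<theta>0))\<bar>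
        \<le> norm (F' (W, h \<theta>0)) * norm (h \<theta> - h \<theta>0 - L (\<theta> - \<theta>0))"
      using norm_blinfun[of "F' (W, h \<theta>0)" "(0, h \<theta> - h \<theta>0 - L (\<theta> - \<theta>0))"]
      by (simp add: norm_Pair flip: blinfun.diff_right)
    also have "\<dots> \<le> B * (\<epsilon> / (2 * B) * norm (\<theta> - \<theta>0))"
      using B[OF \<open>W \<in> X\<close>] h_expand that(2) \<open>B > 0\<close> by (intro mult_mono) auto
    also have "\<dots> = \<epsilon> / 2 * norm (\<theta> - \<theta>0)" using \<open>B > 0\<close> by simp
    finally have "\<bar>F' (W, h \<theta>0) (0, h \<theta> - h \<theta>0) - F' (W, h \<theta>0) (0, L (\<theta> - \<theta>0))\<bar>
        \<le> \<epsilon> / 2 * norm (\<theta> - \<theta>0)" .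
    moreover have "\<bar>F (W, h \<theta>) - F (W, h \<theta>0) - F' (W, h \<theta>0) (0, h \<theta> - h \<theta>0)\<bar>
        \<le> \<epsilon> / 2 * norm (\<theta> - \<theta>0)"
      using expand \<open>W \<in> X\<close> that(2) by simp
    ultimately show ?thesis by arith
  qed
  moreover have "min \<delta>1 \<delta>2 > 0" using \<open>\<delta>1 > 0\<close> \<open>\<delta>2 > 0\<close> by simp
  ultimately show ?thesis by blast
qed

lemma maxval_eq_argmax: "W \<in> argmaxset f X \<Longrightarrow> maxval f X = f W"
  unfolding maxval_def argmaxset_def by (rule cSup_eq_maximum) auto

lemma argmaxset_nonempty:
  assumes "compact X" "X \<noteq> {}" "continuous_on X f"
  shows "argmaxset f X \<noteq> {}"
proof -
  obtain W where "W \<in> X" "\<forall>V\<in>X. f V \<le> f W"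
    using compact_attains_sup[OF compact_continuous_image[OF assms(3,1)]] assms(2) by auto
  then show ?thesis unfolding argmaxset_def by blast
qed

lemma le_maxval:
  assumes "argmaxset f X \<noteq> {}" "W \<in> X"
  shows "f W \<le> maxval f X"
proof -
  obtain V where "V \<in> argmaxset f X" using assms(1) by blast
  then show ?thesis using assms(2) by (simp add: maxval_eq_argmax argmaxset_def)
qed

lemma maxval_diff_le:
  assumes "argmaxset f X \<noteq> {}" "argmaxset g X \<noteq> {}" "\<forall>W\<in>X. \<bar>f W - g W\<bar> \<le> c"
  shows "\<bar>maxval f X - maxval g X\<bar> \<le> c"
proof -
  obtain Wf Wg where "Wf \<in> argmaxset f X" "Wg \<in> argmaxset g X"
    using assms(1,2) by blast
  then have "Wf \<in> X" "Wg \<in> X" "f Wg \<le> f Wf" "g Wf \<le> g Wg"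
    and "maxval f X = f Wf" "maxval g X = g Wg"
    by (auto simp: argmaxset_def maxval_eq_argmax)
  with assms(3) show ?thesis
    by (fastforce simp: abs_le_iff)
qed

lemma infdist_less_imp_ex: "A \<noteq> {} \<Longrightarrow> infdist x A < r \<Longrightarrow> \<exists>a\<in>A. dist x a < r"
  unfolding infdist_notempty by (subst (asm) cINF_less_iff) (auto intro: bdd_belowI[of _ 0])

lemma feasible_eq_cball: "feasible P = cball (0::'a::real_normed_vector) (sqrt P)"
proof -
  have *: "(norm x)\<^sup>2 \<le> P \<longleftrightarrow> norm x \<le> sqrt P" for x :: 'a
  proof
    show "(norm x)\<^sup>2 \<le> P \<Longrightarrow> norm x \<le> sqrt P" by (rule real_le_rsqrt)
    assume "norm x \<le> sqrt P"
    then have "(norm x)\<^sup>2 \<le> (sqrt P)\<^sup>2" by (simp add: power_mono)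
    also have "(sqrt P)\<^sup>2 = P" using \<open>norm x \<le> sqrt P\<close> norm_ge_zero[of x]
      by (smt (verit) real_sqrt_lt_0_iff real_sqrt_pow2)
    finally show "(norm x)\<^sup>2 \<le> P" .
  qed
  show ?thesis by (rule set_eqI) (simp add: feasible_def *)
qed

lemma mult_powr_less_near_zero:
  fixes c \<eta> r :: real
  assumes "\<eta> > 0" "r > 0"
  obtains \<tau> where "\<tau> > 0" "\<And>x. 0 \<le> x \<Longrightarrow> x < \<tau> \<Longrightarrow> c * x powr \<eta> < r"
proof
  define q where "q = r / (\<bar>c\<bar> + 1)"
  have "q > 0" using assms by (simp add: q_def add_nonneg_pos)
  then show "q powr (1 / \<eta>) > 0" by simp
  fix x :: real assume "0 \<le> x" "x < q powr (1 / \<eta>)"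
  then have "x powr \<eta> \<le> (q powr (1 / \<eta>)) powr \<eta>" using assms by (intro powr_mono2) auto
  also have "\<dots> = q" using \<open>q > 0\<close> assms by (simp add: powr_powr)
  finally have "c * x powr \<eta> \<le> \<bar>c\<bar> * q"
    by (smt (verit) abs_ge_self abs_ge_zero mult_mono mult_right_mono powr_ge_zero)
  also have "\<bar>c\<bar> * q < r" using assms by (simp add: q_def field_simps)
  finally show "c * x powr \<eta> < r" .
qed

lemma holder_error_bound_imp_gap_controls_distance:
  assumes "\<eta> > 0" and nonempty: "\<And>\<theta>. \<theta> \<in> N \<Longrightarrow> argmaxset (\<lambda>V. g V \<theta>) X \<noteq> {}"
    and error_bound: "\<And>\<theta> W. \<theta> \<in> N \<Longrightarrow> W \<in> X \<Longrightarrow> infdist W (argmaxset (\<lambda>V. g V \<theta>) X)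
        \<le> c * (maxval (\<lambda>V. g V \<theta>) X - g W \<theta>) powr \<eta>"
    and "r > 0"
  shows "\<exists>\<tau>>0. \<forall>\<theta>\<in>N. \<forall>W\<in>X.
    maxval (\<lambda>V. g V \<theta>) X - g W \<theta> < \<tau> \<longrightarrow> infdist W (argmaxset (\<lambda>V. g V \<theta>) X) < r"
proof -
  obtain \<tau> where "\<tau> > 0" and \<tau>: "\<And>x. 0 \<le> x \<Longrightarrow> x < \<tau> \<Longrightarrow> c * x powr \<eta> < r"
    using mult_powr_less_near_zero[OF \<open>\<eta> > 0\<close> \<open>r > 0\<close>] by blast
  have "infdist W (argmaxset (\<lambda>V. g V \<theta>) X) < r"
    if "\<theta> \<in> N" "W \<in> X" "maxval (\<lambda>V. g V \<theta>) X - g W \<theta> < \<tau>" for \<theta> W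
  proof -
    have "0 \<le> maxval (\<lambda>V. g V \<theta>) X - g W \<theta>"
      using le_maxval[OF nonempty[OF that(1)] that(2)] by simp
    with error_bound[OF that(1,2)] \<tau>[OF _ that(3)] show ?thesis by linarith
  qed
  with \<open>\<tau> > 0\<close> show ?thesis by (intro exI[of _ \<tau>]) auto
qed

(* g W theta is the objective at decision W and parameter theta, D W its derivative in theta at
   theta0; the last assumption is the qualitative content of the error bound. *)
locale danskin_setting =
  fixes g :: "'w::metric_space \<Rightarrow> 'a::real_normed_vector \<Rightarrow> real"
    and D :: "'w \<Rightarrow> 'a \<Rightarrow>\<^sub>L real"
    and X :: "'w set" and N :: "'a set" and \<theta>0 :: 'a
  assumes compact_X: "compact X" and X_nonempty: "X \<noteq> {}"
    and open_N: "open N" and \<theta>0_in_N: "\<theta>0 \<in> N"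
    and continuous_g: "\<And>\<theta>. \<theta> \<in> N \<Longrightarrow> continuous_on X (\<lambda>W. g W \<theta>)"
    and continuous_D: "continuous_on X D"
    and uniform_expansion: "\<And>\<epsilon>. \<epsilon> > 0 \<Longrightarrow> \<exists>\<delta>>0. \<forall>W\<in>X. \<forall>\<theta>. norm (\<theta> - \<theta>0) < \<delta> \<longrightarrow>
        \<bar>g W \<theta> - g W \<theta>0 - D W (\<theta> - \<theta>0)\<bar> \<le> \<epsilon> * norm (\<theta> - \<theta>0)"
    and gap_controls_distance: "\<And>r. r > 0 \<Longrightarrow> \<exists>\<tau>>0. \<forall>\<theta>\<in>N. \<forall>W\<in>X.
        maxval (\<lambda>V. g V \<theta>) X - g W \<theta> < \<tau> \<longrightarrow> infdist W (argmaxset (\<lambda>V. g V \<theta>) X) < r"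
begin

abbreviation opt_value :: "'a \<Rightarrow> real" where
  "opt_value \<theta> \<equiv> maxval (\<lambda>W. g W \<theta>) X"

abbreviation maximizers :: "'a \<Rightarrow> 'w set" where
  "maximizers \<theta> \<equiv> argmaxset (\<lambda>W. g W \<theta>) X"

lemma maximizers_nonempty: "\<theta> \<in> N \<Longrightarrow> maximizers \<theta> \<noteq> {}"
  by (rule argmaxset_nonempty[OF compact_X X_nonempty continuous_g])

lemma maximizers_subset: "maximizers \<theta> \<subseteq> X"
  by (auto simp: argmaxset_def)

lemma D_uniformly_continuous:
  assumes "\<epsilon> > 0"
  obtains r where "r > 0" "\<And>W V v. W \<in> X \<Longrightarrow> V \<in> X \<Longrightarrow> dist W V < r \<Longrightarrow>
      \<bar>D W v - D V v\<bar> \<le> \<epsilon> * norm v"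
proof -
  obtain r where "r > 0" and r: "\<forall>W\<in>X. \<forall>V\<in>X. dist V W < r \<longrightarrow> dist (D V) (D W) < \<epsilon>"
    using compact_uniformly_continuous[OF continuous_D compact_X] assms
    unfolding uniformly_continuous_on_def by blast
  have "\<bar>D W v - D V v\<bar> \<le> \<epsilon> * norm v" if "W \<in> X" "V \<in> X" "dist W V < r" for W V v
  proof -
    have "\<bar>D W v - D V v\<bar> \<le> norm (D W - D V) * norm v"
      using norm_blinfun[of "D W - D V" v] by (simp add: blinfun.diff_left)
    also have "\<dots> \<le> \<epsilon> * norm v"
      using r that by (intro mult_right_mono) (auto simp: dist_norm less_imp_le)
    finally show ?thesis .
  qed
  with \<open>r > 0\<close> show thesis by (rule that)
qed

lemma g_uniformly_lipschitz_at_\<theta>0: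
  obtains K \<delta> where "K \<ge> 0" "\<delta> > 0"
    "\<And>W \<theta>. W \<in> X \<Longrightarrow> norm (\<theta> - \<theta>0) < \<delta> \<Longrightarrow> \<bar>g W \<theta> - g W \<theta>0\<bar> \<le> K * norm (\<theta> - \<theta>0)"
proof -
  obtain B where B: "\<forall>W\<in>X. norm (D W) \<le> B"
    using compact_imp_bounded[OF compact_continuous_image[OF continuous_D compact_X]]
    unfolding bounded_iff by blast
  obtain \<delta> where "\<delta> > 0" and \<delta>: "\<forall>W\<in>X. \<forall>\<theta>. norm (\<theta> - \<theta>0) < \<delta> \<longrightarrow>
      \<bar>g W \<theta> - g W \<theta>0 - D W (\<theta> - \<theta>0)\<bar> \<le> 1 * norm (\<theta> - \<theta>0)"
    using uniform_expansion[of 1] by auto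
  have "\<bar>g W \<theta> - g W \<theta>0\<bar> \<le> (max B 0 + 1) * norm (\<theta> - \<theta>0)"
    if "W \<in> X" "norm (\<theta> - \<theta>0) < \<delta>" for W \<theta>
  proof -
    have "\<bar>D W (\<theta> - \<theta>0)\<bar> \<le> max B 0 * norm (\<theta> - \<theta>0)"
      using norm_blinfun[of "D W" "\<theta> - \<theta>0"] B that(1)
      by (smt (verit, best) mult_right_mono norm_ge_zero real_norm_def)
    moreover have "\<bar>g W \<theta> - g W \<theta>0 - D W (\<theta> - \<theta>0)\<bar> \<le> norm (\<theta> - \<theta>0)"
      using \<delta> that by simp
    ultimately show ?thesis by (simp add: algebra_simps abs_le_iff)
  qed
  then show thesis using that[of "max B 0 + 1" \<delta>] \<open>\<delta> > 0\<close> by auto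
qed

lemma opt_value_lipschitz_at_\<theta>0:
  obtains K \<delta> where "K \<ge> 0" "\<delta> > 0" "\<And>\<theta>. norm (\<theta> - \<theta>0) < \<delta> \<Longrightarrow> \<theta> \<in> N"
    "\<And>W \<theta>. W \<in> X \<Longrightarrow> norm (\<theta> - \<theta>0) < \<delta> \<Longrightarrow> \<bar>g W \<theta> - g W \<theta>0\<bar> \<le> K * norm (\<theta> - \<theta>0)"
    "\<And>\<theta>. norm (\<theta> - \<theta>0) < \<delta> \<Longrightarrow> \<bar>opt_value \<theta> - opt_value \<theta>0\<bar> \<le> K * norm (\<theta> - \<theta>0)"
proof -
  obtain K \<delta>1 where "K \<ge> 0" "\<delta>1 > 0" and lip: "\<And>W \<theta>. W \<in> X \<Longrightarrow> norm (\<theta> - \<theta>0) < \<delta>1 \<Longrightarrow>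
      \<bar>g W \<theta> - g W \<theta>0\<bar> \<le> K * norm (\<theta> - \<theta>0)"
    using g_uniformly_lipschitz_at_\<theta>0 by blast
  obtain e where "e > 0" "ball \<theta>0 e \<subseteq> N"
    using open_N \<theta>0_in_N openE by blast
  then have in_N: "\<theta> \<in> N" if "norm (\<theta> - \<theta>0) < min \<delta>1 e" for \<theta>
    using that by (auto simp: dist_norm norm_minus_commute)
  have "\<bar>opt_value \<theta> - opt_value \<theta>0\<bar> \<le> K * norm (\<theta> - \<theta>0)" if "norm (\<theta> - \<theta>0) < min \<delta>1 e" for \<theta>
    using that lip by (intro maxval_diff_le maximizers_nonempty in_N \<theta>0_in_N) auto
  with \<open>K \<ge> 0\<close> \<open>\<delta>1 > 0\<close> \<open>e > 0\<close> in_N lip show thesis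
    by (intro that[of K "min \<delta>1 e"]) auto
qed

lemma maximizers_nearly_optimal_near_\<theta>0:
  assumes "\<tau> > 0"
  obtains \<delta> where "\<delta> > 0" "\<And>\<theta>. norm (\<theta> - \<theta>0) < \<delta> \<Longrightarrow> \<theta> \<in> N"
    "\<And>\<theta> V. norm (\<theta> - \<theta>0) < \<delta> \<Longrightarrow> V \<in> maximizers \<theta>0 \<Longrightarrow> opt_value \<theta> - g V \<theta> < \<tau>"
    "\<And>\<theta> W. norm (\<theta> - \<theta>0) < \<delta> \<Longrightarrow> W \<in> maximizers \<theta> \<Longrightarrow> opt_value \<theta>0 - g W \<theta>0 < \<tau>"
proof -
  obtain K \<delta>1 where "K \<ge> 0" "\<delta>1 > 0" and in_N: "\<And>\<theta>. norm (\<theta> - \<theta>0) < \<delta>1 \<Longrightarrow> \<theta> \<in> N"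
    and g_lip: "\<And>W \<theta>. W \<in> X \<Longrightarrow> norm (\<theta> - \<theta>0) < \<delta>1 \<Longrightarrow> \<bar>g W \<theta> - g W \<theta>0\<bar> \<le> K * norm (\<theta> - \<theta>0)"
    and opt_lip: "\<And>\<theta>. norm (\<theta> - \<theta>0) < \<delta>1 \<Longrightarrow> \<bar>opt_value \<theta> - opt_value \<theta>0\<bar> \<le> K * norm (\<theta> - \<theta>0)"
    using opt_value_lipschitz_at_\<theta>0 by blast
  define \<delta> where "\<delta> = min \<delta>1 (\<tau> / (2 * K + 1))"
  have small: "2 * K * norm (\<theta> - \<theta>0) < \<tau>" if "norm (\<theta> - \<theta>0) < \<delta>" for \<theta>
  proof -
    have "2 * K * norm (\<theta> - \<theta>0) \<le> (2 * K + 1) * norm (\<theta> - \<theta>0)" by (simp add: algebra_simps)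
    also have "\<dots> < \<tau>" using that \<open>K \<ge> 0\<close> by (simp add: \<delta>_def field_simps)
    finally show ?thesis .
  qed
  show thesis
  proof (rule that)
    show "\<delta> > 0" using \<open>\<delta>1 > 0\<close> \<open>K \<ge> 0\<close> assms by (simp add: \<delta>_def)
    show "\<theta> \<in> N" if "norm (\<theta> - \<theta>0) < \<delta>" for \<theta> using in_N that by (simp add: \<delta>_def)
  next
    fix \<theta> V assume \<theta>: "norm (\<theta> - \<theta>0) < \<delta>" and V: "V \<in> maximizers \<theta>0"
    then have "\<bar>g V \<theta> - g V \<theta>0\<bar> \<le> K * norm (\<theta> - \<theta>0)"
      using maximizers_subset by (intro g_lip) (auto simp: \<delta>_def)
    with opt_lip[of \<theta>] small[OF \<theta>] maxval_eq_argmax[OF V] \<theta>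
    show "opt_value \<theta> - g V \<theta> < \<tau>" by (simp add: \<delta>_def abs_le_iff)
  next
    fix \<theta> W assume \<theta>: "norm (\<theta> - \<theta>0) < \<delta>" and W: "W \<in> maximizers \<theta>"
    then have "\<bar>g W \<theta> - g W \<theta>0\<bar> \<le> K * norm (\<theta> - \<theta>0)"
      using maximizers_subset by (intro g_lip) (auto simp: \<delta>_def)
    with opt_lip[of \<theta>] small[OF \<theta>] maxval_eq_argmax[OF W] \<theta>
    show "opt_value \<theta>0 - g W \<theta>0 < \<tau>" by (simp add: \<delta>_def abs_le_iff)
  qed
qed

lemma maximizers_lower_semicontinuous:
  assumes "r > 0"
  shows "\<exists>\<delta>>0. \<forall>\<theta> V. norm (\<theta> - \<theta>0) < \<delta> \<longrightarrow> V \<in> maximizers \<theta>0 \<longrightarrow>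
    (\<exists>W\<in>maximizers \<theta>. dist V W < r)"
proof -
  obtain \<tau> where "\<tau> > 0" and \<tau>: "\<forall>\<theta>\<in>N. \<forall>W\<in>X. opt_value \<theta> - g W \<theta> < \<tau> \<longrightarrow> infdist W (maximizers \<theta>) < r"
    using gap_controls_distance[OF assms] by blast
  obtain \<delta> where "\<delta> > 0" and in_N: "\<And>\<theta>. norm (\<theta> - \<theta>0) < \<delta> \<Longrightarrow> \<theta> \<in> N"
    and gap: "\<And>\<theta> V. norm (\<theta> - \<theta>0) < \<delta> \<Longrightarrow> V \<in> maximizers \<theta>0 \<Longrightarrow> opt_value \<theta> - g V \<theta> < \<tau>"
    using maximizers_nearly_optimal_near_\<theta>0[OF \<open>\<tau> > 0\<close>] by metis
  have "\<exists>W\<in>maximizers \<theta>. dist V W < r" if "norm (\<theta> - \<theta>0) < \<delta>" "V \<in> maximizers \<theta>0" for \<theta> V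
    using that \<tau> gap in_N maximizers_subset maximizers_nonempty
    by (intro infdist_less_imp_ex) blast+
  with \<open>\<delta> > 0\<close> show ?thesis by blast
qed

lemma maximizers_upper_semicontinuous:
  assumes "r > 0"
  shows "\<exists>\<delta>>0. \<forall>\<theta>. norm (\<theta> - \<theta>0) < \<delta> \<longrightarrow> \<theta> \<in> N \<and>
    (\<forall>W\<in>maximizers \<theta>. \<exists>V\<in>maximizers \<theta>0. dist W V < r)"
proof -
  obtain \<tau> where "\<tau> > 0" and \<tau>: "\<forall>W\<in>X. opt_value \<theta>0 - g W \<theta>0 < \<tau> \<longrightarrow> infdist W (maximizers \<theta>0) < r"
    using gap_controls_distance[OF assms] \<theta>0_in_N by blast
  obtain \<delta> where "\<delta> > 0" and in_N: "\<And>\<theta>. norm (\<theta> - \<theta>0) < \<delta> \<Longrightarrow> \<theta> \<in> N"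
    and gap: "\<And>\<theta> W. norm (\<theta> - \<theta>0) < \<delta> \<Longrightarrow> W \<in> maximizers \<theta> \<Longrightarrow> opt_value \<theta>0 - g W \<theta>0 < \<tau>"
    using maximizers_nearly_optimal_near_\<theta>0[OF \<open>\<tau> > 0\<close>] by metis
  have "\<exists>V\<in>maximizers \<theta>0. dist W V < r" if "norm (\<theta> - \<theta>0) < \<delta>" "W \<in> maximizers \<theta>" for \<theta> W
    using that \<tau> gap maximizers_subset maximizers_nonempty[OF \<theta>0_in_N]
    by (intro infdist_less_imp_ex) blast+
  with \<open>\<delta> > 0\<close> in_N show ?thesis by blast
qed

lemma uniform_expansion_along_ray:
  assumes "\<epsilon> > 0"
  obtains \<delta> where "\<delta> > 0"
    "\<And>U t. U \<in> X \<Longrightarrow> 0 < t \<Longrightarrow> t < \<delta> \<Longrightarrow> \<bar>g U (\<theta>0 + t *\<^sub>R d) - g U \<theta>0 - t * D U d\<bar> \<le> \<epsilon> * t"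
proof -
  have "norm d + 1 > 0" using norm_ge_zero[of d] by linarith
  then have "\<epsilon> / (norm d + 1) > 0" using assms by simp
  then obtain \<delta> where "\<delta> > 0" and expand: "\<forall>W\<in>X. \<forall>\<theta>. norm (\<theta> - \<theta>0) < \<delta> \<longrightarrow>
      \<bar>g W \<theta> - g W \<theta>0 - D W (\<theta> - \<theta>0)\<bar> \<le> \<epsilon> / (norm d + 1) * norm (\<theta> - \<theta>0)"
    using uniform_expansion by blast
  have "\<bar>g U (\<theta>0 + t *\<^sub>R d) - g U \<theta>0 - t * D U d\<bar> \<le> \<epsilon> * t"
    if "U \<in> X" "0 < t" "t < \<delta> / (norm d + 1)" for U t
  proof -
    have "norm (t *\<^sub>R d) \<le> t * (norm d + 1)" using \<open>0 < t\<close> by (simp add: algebra_simps)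
    moreover have "t * (norm d + 1) < \<delta>" using that(3) \<open>norm d + 1 > 0\<close> by (simp add: field_simps)
    ultimately have "norm ((\<theta>0 + t *\<^sub>R d) - \<theta>0) < \<delta>" by simp
    then have "\<bar>g U (\<theta>0 + t *\<^sub>R d) - g U \<theta>0 - D U ((\<theta>0 + t *\<^sub>R d) - \<theta>0)\<bar>
        \<le> \<epsilon> / (norm d + 1) * norm ((\<theta>0 + t *\<^sub>R d) - \<theta>0)"
      using expand \<open>U \<in> X\<close> by blast
    then have "\<bar>g U (\<theta>0 + t *\<^sub>R d) - g U \<theta>0 - D U (t *\<^sub>R d)\<bar> \<le> \<epsilon> / (norm d + 1) * norm (t *\<^sub>R d)"
      by simp
    also have "\<dots> \<le> \<epsilon> / (norm d + 1) * (t * (norm d + 1))"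
      using \<open>norm (t *\<^sub>R d) \<le> t * (norm d + 1)\<close> \<open>\<epsilon> / (norm d + 1) > 0\<close> by (intro mult_left_mono) auto
    also have "\<dots> = \<epsilon> * t" using \<open>norm d + 1 > 0\<close> by simp
    finally show ?thesis by (simp add: blinfun.scaleR_right)
  qed
  with \<open>\<delta> > 0\<close> \<open>norm d + 1 > 0\<close> show thesis by (intro that[of "\<delta> / (norm d + 1)"]) auto
qed

lemma maximizers_move_away:
  assumes V1: "V1 \<in> maximizers \<theta>0" and "V2 \<in> X" and less: "D V2 d < D V1 d"
  obtains r \<delta> where "r > 0" "\<delta> > 0"
    "\<And>t W. 0 < t \<Longrightarrow> t < \<delta> \<Longrightarrow> W \<in> maximizers (\<theta>0 + t *\<^sub>R d) \<Longrightarrow> r \<le> dist V2 W"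
proof -
  define c where "c = D V1 d - D V2 d"
  have "c > 0" using less by (simp add: c_def)
  then have "norm d > 0" by (auto simp: c_def)
  then obtain r where "r > 0" and D_close: "\<And>W V v. W \<in> X \<Longrightarrow> V \<in> X \<Longrightarrow> dist W V < r \<Longrightarrow>
      \<bar>D W v - D V v\<bar> \<le> c / (4 * norm d) * norm v"
    using D_uniformly_continuous[of "c / (4 * norm d)"] \<open>c > 0\<close> by auto
  obtain \<delta> where "\<delta> > 0" and expand: "\<And>U t. U \<in> X \<Longrightarrow> 0 < t \<Longrightarrow> t < \<delta> \<Longrightarrow>
      \<bar>g U (\<theta>0 + t *\<^sub>R d) - g U \<theta>0 - t * D U d\<bar> \<le> c / 8 * t"
    using uniform_expansion_along_ray[of "c / 8" d] \<open>c > 0\<close> by auto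
  have "r \<le> dist V2 W"
    if t: "0 < t" "t < \<delta>" and W: "W \<in> maximizers (\<theta>0 + t *\<^sub>R d)" for t W
  proof (rule ccontr)
    assume "\<not> r \<le> dist V2 W"
    have "W \<in> X" "V1 \<in> X" using W V1 maximizers_subset by auto
    have "\<bar>D W d - D V2 d\<bar> \<le> c / (4 * norm d) * norm d"
      using D_close[OF \<open>W \<in> X\<close> \<open>V2 \<in> X\<close>, of d] \<open>\<not> r \<le> dist V2 W\<close> by (simp add: dist_commute)
    also have "\<dots> = c / 4" using \<open>norm d > 0\<close> by simp
    finally have "D W d \<le> D V2 d + c / 4" by linarith
    then have "t * D W d \<le> t * D V2 d + c / 4 * t"
      using mult_left_mono[of "D W d" "D V2 d + c / 4" t] \<open>t > 0\<close> by (simp add: algebra_simps)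
    moreover have "g W \<theta>0 \<le> g V1 \<theta>0" using V1 \<open>W \<in> X\<close> by (simp add: argmaxset_def)
    moreover have "g V1 (\<theta>0 + t *\<^sub>R d) \<le> g W (\<theta>0 + t *\<^sub>R d)" using W \<open>V1 \<in> X\<close> by (simp add: argmaxset_def)
    moreover have "t * D V1 d = t * D V2 d + c * t" by (simp add: c_def algebra_simps)
    moreover have "c * t > 0" using \<open>t > 0\<close> \<open>c > 0\<close> by simp
    ultimately show False
      using expand[OF \<open>W \<in> X\<close> t] expand[OF \<open>V1 \<in> X\<close> t] unfolding abs_le_iff by linarith
  qed
  with \<open>r > 0\<close> \<open>\<delta> > 0\<close> show thesis by (rule that)
qed

lemma derivative_le_on_maximizers:
  assumes V1: "V1 \<in> maximizers \<theta>0" and V2: "V2 \<in> maximizers \<theta>0"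
  shows "D V1 d \<le> D V2 d"
proof (rule ccontr)
  assume "\<not> D V1 d \<le> D V2 d"
  moreover have "V2 \<in> X" using V2 maximizers_subset by auto
  ultimately obtain r \<delta> where "r > 0" "\<delta> > 0" and away: "\<And>t W. 0 < t \<Longrightarrow> t < \<delta> \<Longrightarrow>
      W \<in> maximizers (\<theta>0 + t *\<^sub>R d) \<Longrightarrow> r \<le> dist V2 W"
    using maximizers_move_away[OF V1] by (metis not_le)
  obtain \<delta>' where "\<delta>' > 0" and close: "\<forall>\<theta> V. norm (\<theta> - \<theta>0) < \<delta>' \<longrightarrow> V \<in> maximizers \<theta>0 \<longrightarrow>
      (\<exists>W\<in>maximizers \<theta>. dist V W < r)"
    using maximizers_lower_semicontinuous[OF \<open>r > 0\<close>] by blast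
  have "norm d + 1 > 0" using norm_ge_zero[of d] by linarith
  define t where "t = min \<delta> \<delta>' / (2 * (norm d + 1))"
  have "0 < t" using \<open>\<delta> > 0\<close> \<open>\<delta>' > 0\<close> \<open>norm d + 1 > 0\<close> by (simp add: t_def)
  have t_scaled: "t * (norm d + 1) = min \<delta> \<delta>' / 2"
    using \<open>norm d + 1 > 0\<close> by (simp add: t_def field_simps)
  have "t * norm d \<le> t * (norm d + 1)" "t \<le> t * (norm d + 1)"
    using \<open>0 < t\<close> by (simp_all add: algebra_simps)
  then have "t < \<delta>" "t * norm d < \<delta>'"
    unfolding t_scaled using \<open>\<delta> > 0\<close> \<open>\<delta>' > 0\<close> by linarith+
  then have "\<exists>W\<in>maximizers (\<theta>0 + t *\<^sub>R d). dist V2 W < r"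
    using close V2 \<open>0 < t\<close> by simp
  then obtain W where "W \<in> maximizers (\<theta>0 + t *\<^sub>R d)" "dist V2 W < r" by blast
  with away[OF \<open>0 < t\<close> \<open>t < \<delta>\<close>] show False by fastforce
qed

lemma derivative_eq_on_maximizers:
  "V1 \<in> maximizers \<theta>0 \<Longrightarrow> V2 \<in> maximizers \<theta>0 \<Longrightarrow> D V1 = D V2"
  by (intro blinfun_eqI antisym derivative_le_on_maximizers)

lemma has_derivative_g: "W \<in> X \<Longrightarrow> ((\<lambda>\<theta>. g W \<theta>) has_derivative D W) (at \<theta>0)"
  unfolding has_derivative_at_alt
  using uniform_expansion by (fastforce simp: blinfun.bounded_linear_right)

lemma has_derivative_opt_value:
  assumes V: "V \<in> maximizers \<theta>0"
  shows "(opt_value has_derivative D V) (at \<theta>0)"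
  unfolding has_derivative_at_alt
proof (intro conjI allI impI blinfun.bounded_linear_right)
  fix \<epsilon> :: real assume "\<epsilon> > 0"
  obtain \<delta>1 where "\<delta>1 > 0" and expand: "\<forall>W\<in>X. \<forall>\<theta>. norm (\<theta> - \<theta>0) < \<delta>1 \<longrightarrow>
      \<bar>g W \<theta> - g W \<theta>0 - D W (\<theta> - \<theta>0)\<bar> \<le> \<epsilon> / 2 * norm (\<theta> - \<theta>0)"
    using uniform_expansion[of "\<epsilon> / 2"] \<open>\<epsilon> > 0\<close> by auto
  obtain r where "r > 0" and D_close: "\<And>W V v. W \<in> X \<Longrightarrow> V \<in> X \<Longrightarrow> dist W V < r \<Longrightarrow>
      \<bar>D W v - D V v\<bar> \<le> \<epsilon> / 2 * norm v"
    using D_uniformly_continuous[of "\<epsilon> / 2"] \<open>\<epsilon> > 0\<close> by auto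
  obtain \<delta>2 where "\<delta>2 > 0" and close: "\<forall>\<theta>. norm (\<theta> - \<theta>0) < \<delta>2 \<longrightarrow> \<theta> \<in> N \<and>
      (\<forall>W\<in>maximizers \<theta>. \<exists>V\<in>maximizers \<theta>0. dist W V < r)"
    using maximizers_upper_semicontinuous[OF \<open>r > 0\<close>] by blast
  have "\<bar>opt_value \<theta> - opt_value \<theta>0 - D V (\<theta> - \<theta>0)\<bar> \<le> \<epsilon> * norm (\<theta> - \<theta>0)"
    if \<theta>: "norm (\<theta> - \<theta>0) < min \<delta>1 \<delta>2" for \<theta>
  proof -
    have "\<theta> \<in> N" using close \<theta> by simp
    then obtain W where W: "W \<in> maximizers \<theta>"
      using maximizers_nonempty by blast
    then obtain V' where V': "V' \<in> maximizers \<theta>0" "dist W V' < r"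
      using close \<theta> by auto
    have "W \<in> X" "V \<in> X" "V' \<in> X" using W V V' maximizers_subset by auto
    have "\<bar>D W (\<theta> - \<theta>0) - D V (\<theta> - \<theta>0)\<bar> \<le> \<epsilon> / 2 * norm (\<theta> - \<theta>0)"
      using D_close[OF \<open>W \<in> X\<close> \<open>V' \<in> X\<close> V'(2)] derivative_eq_on_maximizers[OF V'(1) V] by simp
    moreover have "\<bar>g W \<theta> - g W \<theta>0 - D W (\<theta> - \<theta>0)\<bar> \<le> \<epsilon> / 2 * norm (\<theta> - \<theta>0)"
      "\<bar>g V \<theta> - g V \<theta>0 - D V (\<theta> - \<theta>0)\<bar> \<le> \<epsilon> / 2 * norm (\<theta> - \<theta>0)"
      using expand \<open>W \<in> X\<close> \<open>V \<in> X\<close> \<theta> by auto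
    moreover have "opt_value \<theta> = g W \<theta>" "opt_value \<theta>0 = g V \<theta>0"
      using W V by (simp_all add: maxval_eq_argmax)
    moreover have "g W \<theta>0 \<le> g V \<theta>0" "g V \<theta> \<le> g W \<theta>"
      using W V \<open>W \<in> X\<close> \<open>V \<in> X\<close> by (simp_all add: argmaxset_def)
    ultimately show ?thesis unfolding abs_le_iff by linarith
  qed
  then show "\<exists>\<delta>>0. \<forall>\<theta>. norm (\<theta> - \<theta>0) < \<delta> \<longrightarrow>
      norm (opt_value \<theta> - opt_value \<theta>0 - D V (\<theta> - \<theta>0)) \<le> \<epsilon> * norm (\<theta> - \<theta>0)"
    using \<open>\<delta>1 > 0\<close> \<open>\<delta>2 > 0\<close> by (intro exI[of _ "min \<delta>1 \<delta>2"]) auto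
qed

theorem danskin:
  "opt_value differentiable (at \<theta>0) \<and>
   (\<forall>V\<in>maximizers \<theta>0. \<exists>D'. ((\<lambda>\<theta>. g V \<theta>) has_derivative D') (at \<theta>0)
                          \<and> (opt_value has_derivative D') (at \<theta>0))"
  using maximizers_nonempty[OF \<theta>0_in_N] maximizers_subset
  by (auto simp: differentiable_def intro: has_derivative_g has_derivative_opt_value)

end

lemma danskin_setting_composition:
  fixes F :: "'w::euclidean_space \<times> 'h::euclidean_space \<Rightarrow> real"
    and h :: "'a::real_normed_vector \<Rightarrow> 'h"
  assumes F: "has_continuous_derivative F F'" and h: "(h has_derivative L) (at \<theta>0)"
    and X: "compact X" "X \<noteq> {}" and N: "open N" "\<theta>0 \<in> N" and "\<eta> > 0"
    and error_bound: "\<And>\<theta> W. \<theta> \<in> N \<Longrightarrow> W \<in> X \<Longrightarrow> infdist W (argmaxset (\<lambda>V. F (V, h \<theta>)) X)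
        \<le> c * (maxval (\<lambda>V. F (V, h \<theta>)) X - F (W, h \<theta>)) powr \<eta>"
  shows "danskin_setting (\<lambda>W \<theta>. F (W, h \<theta>)) (\<lambda>W. F' (W, h \<theta>0) o\<^sub>L Blinfun (\<lambda>v. (0, L v))) X N \<theta>0"
proof
  have "bounded_linear (\<lambda>v. (0::'w, L v))"
    using has_derivative_bounded_linear[OF h] by (intro bounded_linear_Pair bounded_linear_zero)
  then have Blinfun_apply: "Blinfun (\<lambda>v. (0::'w, L v)) v = (0, L v)" for v
    by (simp add: bounded_linear_Blinfun_apply)
  have "continuous_on UNIV F" using F by (rule has_continuous_derivative_imp_continuous)
  then show continuous: "continuous_on X (\<lambda>W. F (W, h \<theta>))" for \<theta>
    using continuous_on_compose2[of UNIV F X "\<lambda>W. (W, h \<theta>)"]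
    by (simp add: continuous_on_Pair continuous_on_id continuous_on_const)
  have "continuous_on X (\<lambda>W. F' (W, h \<theta>0))"
    using F continuous_on_compose2[of UNIV F' X "\<lambda>W. (W, h \<theta>0)"]
    by (simp add: has_continuous_derivative_def continuous_on_Pair continuous_on_id continuous_on_const)
  then show "continuous_on X (\<lambda>W. F' (W, h \<theta>0) o\<^sub>L Blinfun (\<lambda>v. (0, L v)))"
    by (rule bounded_bilinear.continuous_on[OF bounded_bilinear_blinfun_compose _ continuous_on_const])
  show "\<exists>\<delta>>0. \<forall>W\<in>X. \<forall>\<theta>. norm (\<theta> - \<theta>0) < \<delta> \<longrightarrow> \<bar>F (W, h \<theta>) - F (W, h \<theta>0)
      - (F' (W, h \<theta>0) o\<^sub>L Blinfun (\<lambda>v. (0, L v))) (\<theta> - \<theta>0)\<bar> \<le> \<epsilon> * norm (\<theta> - \<theta>0)"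
    if "\<epsilon> > 0" for \<epsilon>
    using uniform_chain_rule[OF F h compact_imp_bounded[OF X(1)] that] by (simp add: Blinfun_apply)
  show "\<exists>\<tau>>0. \<forall>\<theta>\<in>N. \<forall>W\<in>X. maxval (\<lambda>V. F (V, h \<theta>)) X - F (W, h \<theta>) < \<tau> \<longrightarrow>
      infdist W (argmaxset (\<lambda>V. F (V, h \<theta>)) X) < r"
    if "r > 0" for r
    using error_bound argmaxset_nonempty[OF X continuous]
    by (intro holder_error_bound_imp_gap_controls_distance[OF \<open>\<eta> > 0\<close> _ _ that]) auto
qed (use X N in auto)

lemma danskin_sumrate:
  fixes h :: "'a::real_normed_vector \<Rightarrow> complex^'m^'k" and \<alpha> \<sigma>2 :: "'k \<Rightarrow> real"
  assumes "\<forall>k. \<sigma>2 k > 0" and "P > 0"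
    and "open N" "\<theta>0 \<in> N" and h: "(h has_derivative L) (at \<theta>0)" and "\<eta> > 0"
    and error_bound: "\<forall>\<theta>\<in>N. \<forall>W\<in>feasible P.
      infdist W (argmaxset (\<lambda>V. sumrate \<alpha> \<sigma>2 V (h \<theta>)) (feasible P))
        \<le> c * (maxval (\<lambda>V. sumrate \<alpha> \<sigma>2 V (h \<theta>)) (feasible P) - sumrate \<alpha> \<sigma>2 W (h \<theta>)) powr \<eta>"
  shows "(\<lambda>t. maxval (\<lambda>W. sumrate \<alpha> \<sigma>2 W (h t)) (feasible P)) differentiable (at \<theta>0)
    \<and> (\<forall>Wopt\<in>argmaxset (\<lambda>W. sumrate \<alpha> \<sigma>2 W (h \<theta>0)) (feasible P).
         \<exists>D. ((\<lambda>t. sumrate \<alpha> \<sigma>2 Wopt (h t)) has_derivative D) (at \<theta>0)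
           \<and> ((\<lambda>t. maxval (\<lambda>W. sumrate \<alpha> \<sigma>2 W (h t)) (feasible P)) has_derivative D) (at \<theta>0))"
proof -
  have "continuously_differentiable
      (\<lambda>p::(complex^'m^'k) \<times> (complex^'m^'k). sumrate \<alpha> \<sigma>2 (fst p) (snd p))"
    using \<open>\<forall>k. \<sigma>2 k > 0\<close> by (intro continuously_differentiable_sumrate) auto
  then obtain F' where F': "has_continuous_derivative
      (\<lambda>p::(complex^'m^'k) \<times> (complex^'m^'k). sumrate \<alpha> \<sigma>2 (fst p) (snd p)) F'"
    unfolding continuously_differentiable_def by blast
  have "compact (feasible P :: (complex^'m^'k) set)" "feasible P \<noteq> ({} :: (complex^'m^'k) set)"
    using \<open>P > 0\<close> by (auto simp: feasible_eq_cball)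
  from danskin_setting_composition[OF F' h this \<open>open N\<close> \<open>\<theta>0 \<in> N\<close> \<open>\<eta> > 0\<close>, of c] error_bound
  interpret danskin_setting "\<lambda>W \<theta>. sumrate \<alpha> \<sigma>2 W (h \<theta>)"
      "\<lambda>W. F' (W, h \<theta>0) o\<^sub>L Blinfun (\<lambda>v. (0, L v))" "feasible P" N \<theta>0
    by simp
  show ?thesis by (rule danskin)
qed

theorem lemma8:
  fixes M :: "'o measure"
    and H :: "real^'s \<Rightarrow> 'o \<Rightarrow> complex^'m^'k"
    and \<alpha> \<sigma>2 :: "'k \<Rightarrow> real"
    and P B_H L_H0 L_H1 \<eta> :: real
    and \<Theta> \<Theta>' \<Theta>'' U :: "(real^'s) set"
    and C :: "real^'s \<Rightarrow> real"
  assumes prob: "prob_space M"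
    and \<alpha>_nonneg: "\<forall>k. \<alpha> k \<ge> 0"
    and \<sigma>_pos: "\<forall>k. \<sigma>2 k > 0"
    and P_pos: "P > 0"
    and \<Theta>_compact: "compact \<Theta>" and \<Theta>_convex: "convex \<Theta>"
    and U_open: "open U" and \<Theta>_sub: "\<Theta> \<subseteq> U"
    and A3: "AE \<omega> in M.
        (\<forall>\<theta>\<in>\<Theta>. norm (H \<theta> \<omega>) \<le> B_H)
      \<and> C2_on U (\<lambda>\<theta>. H \<theta> \<omega>)
      \<and> L_H0-lipschitz_on \<Theta> (\<lambda>\<theta>. H \<theta> \<omega>)
      \<and> (\<exists>H'. (\<forall>\<theta>\<in>U. ((\<lambda>t. H t \<omega>) has_derivative blinfun_apply (H' \<theta>)) (at \<theta>))
              \<and> L_H1-lipschitz_on \<Theta> H')"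
    and analytic: "AE \<omega> in M. real_analytic_on (\<lambda>\<theta>. H \<theta> \<omega>) U"
    and SOSC: "\<forall>\<theta>\<in>\<Theta>. AE \<omega> in M.
        \<forall>Wopt\<in>argmaxset (\<lambda>W. sumrate \<alpha> \<sigma>2 W (H \<theta> \<omega>)) (feasible P).
          \<exists>lam\<ge>0. ((norm Wopt)\<^sup>2 = P \<longrightarrow> lam > 0) \<and> ((norm Wopt)\<^sup>2 \<noteq> P \<longrightarrow> lam = 0)
            \<and> nonsingular_hessian
                (\<lambda>W. sumrate \<alpha> \<sigma>2 W (H \<theta> \<omega>) + lam * ((norm W)\<^sup>2 - P)) Wopt"
    and \<Theta>''_compact: "compact \<Theta>''" and \<Theta>'_open: "open \<Theta>'"
    and chain: "\<Theta>'' \<subseteq> U" "\<Theta>' \<subseteq> \<Theta>''" "\<Theta> \<subseteq> \<Theta>'"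
    and \<eta>_pos: "\<eta> > 0"
    and C_pos: "\<forall>\<theta>\<in>U. C \<theta> > 0"
    and C_bdd: "\<exists>B. \<forall>\<theta>\<in>\<Theta>''. C \<theta> \<le> B"
    and error_bound: "AE \<omega> in M. \<forall>\<theta>\<in>U. \<forall>W\<in>feasible P.
        infdist W (argmaxset (\<lambda>V. sumrate \<alpha> \<sigma>2 V (H \<theta> \<omega>)) (feasible P))
          \<le> C \<theta> * (maxval (\<lambda>V. sumrate \<alpha> \<sigma>2 V (H \<theta> \<omega>)) (feasible P)
                     - sumrate \<alpha> \<sigma>2 W (H \<theta> \<omega>)) powr \<eta>"
  shows "AE \<omega> in M. \<forall>\<theta>\<in>\<Theta>.
      (\<lambda>t. maxval (\<lambda>W. sumrate \<alpha> \<sigma>2 W (H t \<omega>)) (feasible P)) differentiable (at \<theta>)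
    \<and> (\<forall>Wopt\<in>argmaxset (\<lambda>W. sumrate \<alpha> \<sigma>2 W (H \<theta> \<omega>)) (feasible P).
         \<exists>D. ((\<lambda>t. sumrate \<alpha> \<sigma>2 Wopt (H t \<omega>)) has_derivative D) (at \<theta>)
           \<and> ((\<lambda>t. maxval (\<lambda>W. sumrate \<alpha> \<sigma>2 W (H t \<omega>)) (feasible P)) has_derivative D) (at \<theta>))"
proof -
  obtain c where c: "\<forall>\<theta>\<in>\<Theta>''. C \<theta> \<le> c" using C_bdd by blast
  show ?thesis
    using A3 error_bound
  proof eventually_elim
    case (elim \<omega>)
    then obtain H' where H': "\<forall>\<theta>\<in>U. ((\<lambda>t. H t \<omega>) has_derivative blinfun_apply (H' \<theta>)) (at \<theta>)"
      by blast
    have uniform_error_bound: "\<forall>\<theta>\<in>U \<inter> \<Theta>'. \<forall>W\<in>feasible P.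
        infdist W (argmaxset (\<lambda>V. sumrate \<alpha> \<sigma>2 V (H \<theta> \<omega>)) (feasible P))
          \<le> c * (maxval (\<lambda>V. sumrate \<alpha> \<sigma>2 V (H \<theta> \<omega>)) (feasible P)
                 - sumrate \<alpha> \<sigma>2 W (H \<theta> \<omega>)) powr \<eta>"
      using elim c chain(2) by (meson IntD1 IntD2 mult_right_mono order_trans powr_ge_zero subsetD)
    show ?case
      using H' \<Theta>_sub chain(3)
      by (intro ballI danskin_sumrate[OF \<sigma>_pos P_pos open_Int[OF U_open \<Theta>'_open] _ _ \<eta>_pos
            uniform_error_bound]) auto
  qed
qed

end
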